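(* There is a constant $K$ such that the following holds for all $N,d\in\mathbb{N}$, all integers $r<s$ with $d\le r,s\le N-d$, and every fixed partition $Q$ of $\{pr,\ldots,ps-1\}$ into rods. Let $\mathcal{E}_{rs}$ be the event that $pr$ and $ps$ are renewal points of the partition and that its restriction to $\{pr,\ldots,ps-1\}$ equals $Q$; this event makes sense both in $\mathcal{P}_N$ and in $\mathcal{P}_\infty$. Then $$\bigl|\mathbb{P}_N(\mathcal{E}_{rs})-\mathbb{P}(\mathcal{E}_{rs})\bigr|\le K\,\mathbb{P}_N(\mathcal{E}_{rs})\sup_{k\ge d}|u_k-\mu^{-1}| .$$
   Context: Setting. Let $R,\ell>0$, $p\in\mathbb{N}$ and $\gamma=\ell/R$. $\mathcal{Z}=\mathbb{R}\times[0,2\pi R]$. Laughlin's function. $$\Psi_N=\kappa_N\prod_{j<k}\bigl(e^{z_k/R}-e^{z_j/R}\bigr)^p e^{-\sum x_k^2/(2\ell^2)},$$ with $$\kappa_N=(N!)^{-1/2}(2\pi R\ell\sqrt\pi)^{-N/2}\exp\Bigl(-\tfrac12p^2\gamma^2\sum_{j=1}^N(j-1)^2\Bigr),$$ and $C_N=\|\Psi_N\|^2_{L^2(\mathcal{Z}^N)}$. Orthonormal orbitals. $\psi_k(z)\propto e^{kz/R}e^{-x^2/(2\ell^2)}$ for $k\in\mathbb{Z}$. The expansion $$\Psi_N=(N!)^{-1/2}\sum_{\mathbf m\in\{0,\ldots,pN-p\}^N}a_N(\mathbf m)\,\psi_{m_1}(z_1)\cdots\psi_{m_N}(z_N)$$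 defines coefficients $a_N(\mathbf m)$. Renewal points of tuples. For $\mathbf m$ with increasing rearrangement $m_{\sigma(1)}\le\cdots\le m_{\sigma(N)}$, a number $pk$ with $0\le k\le N$ is a renewal point of $\mathbf m$ if $\sum_{j=1}^k m_{\sigma(j)}=pk(k-1)/2$. Renewal weights. Let $$\alpha_n=\frac1{n!}\sum|a_n(\mathbf m)|^2,$$ summed over $\mathbf m$ whose only renewal points are $0$ and $pn$. Let $r=r(p,\gamma)=\exp(-\lim_N\frac1N\ln C_N)$ and $p_n=\alpha_nr^n$. It is known that: - $C_N=\sum_{n_1+\cdots+n_D=N}\alpha_{n_1}\cdots\alpha_{n_D}$; - $\sum_n p_n=1$; - $\mu:=\sum_n np_n<\infty$; - $u_N:=C_Nr^N=\sum_{n_1+\cdots+n_D=N}p_{n_1}\cdots p_{n_D}$ satisfies $u_N\to\mu^{-1}$. Partitions. A rod is a set $\{pj,\ldots,pj+pn-1\}$ with $j\in\mathbb{Z}$ and $n\ge1$. $\mathcal{P}_N$ is the set of partitions of $\{0,\ldots,pN-1\}$ into rods $X_1,\ldots,X_D$ (labeled left to right). The renewal points of such a partition are the left endpoints of its rods together with $pN$. If the rods have lengths $pn_1,\ldots,pn_D$, the partition gets weight $p_{n_1}\cdots p_{n_D}/u_N$; this defines a probability measure $\mathbb{P}_N$ on $\mathcal{P}_N$. Stationary process. $\mathcal{P}_\infty$ is the set of partitions of $\mathbb{Z}$ into rods, with renewal points the left endpoints of the rods. $\mathbb{P}$ is the $p$-periodic stationary renewal process on $\mathcal{P}_\infty$: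 for every $j\in\mathbb{Z}$ and $n_1,\ldots,n_D$, the probability that $pj$ is a renewal point and the next $D$ rods have lengths $pn_1,\ldots,pn_D$ equals $\mu^{-1}p_{n_1}\cdots p_{n_D}$. *)

theory Defs
  imports "HOL-Probability.Probability" "HOL-Library.Disjoint_Sets" "HOL-Library.FuncSet"
begin

text \<open>Pairs (j,k) with j<k<N (0-based indices of the N particles).\<close>
definition laugh_pairs :: "nat \<Rightarrow> (nat \<times> nat) set" where
  "laugh_pairs N = {(j,k). j < k \<and> k < N}"

text \<open>Expanding each factor (w_k - w_j)^p = sum_a binom(p,a) w_k^a (-w_j)^(p-a),
  a choice function a assigns to each pair the exponent of w_k; this is the
  resulting exponent of w_i.\<close>
definition laugh_exp :: "nat \<Rightarrow> nat \<Rightarrow> (nat \<times> nat \<Rightarrow> nat) \<Rightarrow> nat \<Rightarrow> nat" where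
  "laugh_exp p N a i = (\<Sum>j<i. a (j,i)) + (\<Sum>k\<in>{i<..<N}. p - a (i,k))"

text \<open>Coefficient of prod_i w_i^(m i) in prod_{j<k}(w_k - w_j)^p.\<close>
definition laugh_coeff :: "nat \<Rightarrow> nat \<Rightarrow> (nat \<Rightarrow> nat) \<Rightarrow> real" where
  "laugh_coeff p N m =
     (\<Sum>a \<in> laugh_pairs N \<rightarrow>\<^sub>E {0..p}.
        if (\<forall>i<N. laugh_exp p N a i = m i)
        then (\<Prod>jk\<in>laugh_pairs N. real (p choose a jk) * (-1) ^ (p - a jk))
        else 0)"

text \<open>The normalization constant kappa_N of Laughlin's function (gamma = l/R).\<close>
definition laugh_kappa :: "nat \<Rightarrow> real \<Rightarrow> real \<Rightarrow> nat \<Rightarrow> real" where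
  "laugh_kappa p R l N =
     (1 / sqrt (fact N)) * (2 * pi * R * l * sqrt pi) powr (- real N / 2)
     * exp (- (1/2) * (real p)^2 * (l/R)^2 * (\<Sum>j=1..N. (real j - 1)^2))"

text \<open>L2 norm of e^{kz/R} e^{-x^2/(2 l^2)} on Z = R x [0, 2 pi R]; the orthonormal
  orbital is psi_k = (that function) / laugh_orbnorm.\<close>
definition laugh_orbnorm :: "real \<Rightarrow> real \<Rightarrow> nat \<Rightarrow> real" where
  "laugh_orbnorm R l k = sqrt (2 * pi * R * l * sqrt pi * exp ((l/R)^2 * (real k)^2))"

text \<open>Coefficients a_N(m) of the expansion of Psi_N in the orthonormal basis.\<close>
definition laugh_a :: "nat \<Rightarrow> real \<Rightarrow> real \<Rightarrow> nat \<Rightarrow> (nat \<Rightarrow> nat) \<Rightarrow> real" where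
  "laugh_a p R l N m =
     sqrt (fact N) * laugh_kappa p R l N * laugh_coeff p N m
     * (\<Prod>i<N. laugh_orbnorm R l (m i))"

definition laugh_tuples :: "nat \<Rightarrow> nat \<Rightarrow> (nat \<Rightarrow> nat) set" where
  "laugh_tuples p N = {0..<N} \<rightarrow>\<^sub>E {0..p*N-p}"

definition tuple_renewal :: "nat \<Rightarrow> nat \<Rightarrow> (nat \<Rightarrow> nat) \<Rightarrow> nat \<Rightarrow> bool" where
  "tuple_renewal p N m k \<longleftrightarrow>
     k \<le> N \<and> 2 * sum_list (take k (sort (map m [0..<N]))) = p * k * (k - 1)"

definition laugh_alpha :: "nat \<Rightarrow> real \<Rightarrow> real \<Rightarrow> nat \<Rightarrow> real" where
  "laugh_alpha p R l n =
     (1 / fact n) * (\<Sum>m \<in> {m \<in> laugh_tuples p n. {k. tuple_renewal p n m k} = {0, n}}.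
                       (laugh_a p R l n m)^2)"

text \<open>C_N = ||Psi_N||^2, computed via orthonormality of the product orbitals.\<close>
definition laugh_C :: "nat \<Rightarrow> real \<Rightarrow> real \<Rightarrow> nat \<Rightarrow> real" where
  "laugh_C p R l N = (1 / fact N) * (\<Sum>m \<in> laugh_tuples p N. (laugh_a p R l N m)^2)"

definition laugh_r :: "nat \<Rightarrow> real \<Rightarrow> real \<Rightarrow> real" where
  "laugh_r p R l = exp (- lim (\<lambda>N. ln (laugh_C p R l N) / real N))"

text \<open>p_n = alpha_n r^n for n \<ge> 1 (p_0 := 0, it never occurs).\<close>
definition lpw :: "nat \<Rightarrow> real \<Rightarrow> real \<Rightarrow> nat \<Rightarrow> real" where
  "lpw p R l n = (if n = 0 then 0 else laugh_alpha p R l n * (laugh_r p R l) ^ n)"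

definition compositions :: "nat \<Rightarrow> nat list set" where
  "compositions N = {ns. (\<forall>x\<in>set ns. 0 < x) \<and> sum_list ns = N}"

definition lu :: "nat \<Rightarrow> real \<Rightarrow> real \<Rightarrow> nat \<Rightarrow> real" where
  "lu p R l N = (\<Sum>ns \<in> compositions N. prod_list (map (lpw p R l) ns))"

definition lmu :: "nat \<Rightarrow> real \<Rightarrow> real \<Rightarrow> real" where
  "lmu p R l = (\<Sum>n. real n * lpw p R l n)"

definition is_rod :: "nat \<Rightarrow> int set \<Rightarrow> bool" where
  "is_rod p X \<longleftrightarrow> (\<exists>j::int. \<exists>n::nat. n \<ge> 1 \<and> X = {int p * j ..< int p * j + int p * int n})"

definition rodpart_fin :: "nat \<Rightarrow> nat \<Rightarrow> int set set set" where
  "rodpart_fin p N = {P. partition_on {0..<int p * int N} P \<and> (\<forall>X\<in>P. is_rod p X)}"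

definition rodpart_inf :: "nat \<Rightarrow> int set set set" where
  "rodpart_inf p = {P. partition_on UNIV P \<and> (\<forall>X\<in>P. is_rod p X)}"

definition renewal_fin :: "nat \<Rightarrow> nat \<Rightarrow> int set set \<Rightarrow> int \<Rightarrow> bool" where
  "renewal_fin p N P x \<longleftrightarrow> (\<exists>X\<in>P. x = Min X) \<or> x = int p * int N"

definition renewal_inf :: "int set set \<Rightarrow> int \<Rightarrow> bool" where
  "renewal_inf P x \<longleftrightarrow> (\<exists>X\<in>P. x = Min X)"

definition restr :: "int set set \<Rightarrow> int set \<Rightarrow> int set set" where
  "restr P S = {X \<inter> S | X. X \<in> P \<and> X \<inter> S \<noteq> {}}"

definition PN_prob :: "nat \<Rightarrow> real \<Rightarrow> real \<Rightarrow> nat \<Rightarrow> int set set set \<Rightarrow> real" where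
  "PN_prob p R l N A =
     (\<Sum>P \<in> rodpart_fin p N \<inter> A. (\<Prod>X\<in>P. lpw p R l (card X div p)) / lu p R l N)"

definition event_fin :: "nat \<Rightarrow> nat \<Rightarrow> nat \<Rightarrow> nat \<Rightarrow> int set set \<Rightarrow> int set set set" where
  "event_fin p N r s Q = {P \<in> rodpart_fin p N.
      renewal_fin p N P (int p * int r) \<and> renewal_fin p N P (int p * int s)
      \<and> restr P {int p * int r ..< int p * int s} = Q}"

definition event_inf :: "nat \<Rightarrow> nat \<Rightarrow> nat \<Rightarrow> int set set \<Rightarrow> int set set set" where
  "event_inf p r s Q = {P \<in> rodpart_inf p.
      renewal_inf P (int p * int r) \<and> renewal_inf P (int p * int s)
      \<and> restr P {int p * int r ..< int p * int s} = Q}"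

text \<open>Event: pj is a renewal point and the next rods have lengths p*ns!0, p*ns!1, ...\<close>
definition cyl :: "nat \<Rightarrow> int \<Rightarrow> nat list \<Rightarrow> int set set set" where
  "cyl p j ns = {P \<in> rodpart_inf p. \<forall>k < length ns.
      {int p * j + int p * int (sum_list (take k ns)) ..<
       int p * j + int p * int (sum_list (take (Suc k) ns))} \<in> P}"

text \<open>M is (a realisation of) the p-periodic stationary renewal process P on P_infinity.\<close>
definition stationary_renewal :: "nat \<Rightarrow> real \<Rightarrow> real \<Rightarrow> int set set measure \<Rightarrow> bool" where
  "stationary_renewal p R l M \<longleftrightarrow>
     prob_space M \<and> space M = rodpart_inf p \<and>
     (\<forall>j ns. ns \<noteq> [] \<and> (\<forall>n\<in>set ns. 0 < n) \<longrightarrow>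
        cyl p j ns \<in> sets M \<and>
        measure M (cyl p j ns) = (1 / lmu p R l) * prod_list (map (lpw p R l) ns))"

end

theory Submission
  imports Defs
begin

text \<open>
  Write \<open>Q\<close> as the consecutive rods of lengths \<open>p q_1, ..., p q_m\<close> starting at \<open>p r\<close>.
  Because rods are intervals, the event that \<open>p r\<close> and \<open>p s\<close> are renewal points and that
  the restriction to \<open>[p r, p s)\<close> is \<open>Q\<close> just says that every rod of \<open>Q\<close> is a rod of the
  partition. For the stationary process this is a cylinder event of probability \<open>w / \<mu>\<close>,
  where \<open>w = p_(q_1) \<cdots> p_(q_m)\<close>. For \<open>P_N\<close> the partitions containing \<open>Q\<close> correspond to
  pairs of compositions of \<open>r\<close> and \<open>N - s\<close>, so the event has probability
  \<open>u_r w u_(N-s) / u_N\<close>. Since \<open>u_k \<longrightarrow> 1/\<mu> > 0\<close> and \<open>u_k > 0\<close>, the \<open>u_k\<close> with \<open>k \<ge> 1\<close> are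
  bounded above and away from zero, and the estimate follows from
  \<open>ab - cn = (a - c) b + c (b - c) + c (c - n)\<close> because \<open>r, N - s \<ge> d\<close>.
\<close>

section \<open>Consecutive rods\<close>

fun rods_of :: "nat \<Rightarrow> int \<Rightarrow> nat list \<Rightarrow> int set set" where
  "rods_of p a [] = {}"
| "rods_of p a (n # ns) =
     insert {int p * a ..< int p * a + int p * int n} (rods_of p (a + int n) ns)"

lemma finite_rods_of: "finite (rods_of p a ns)"
  by (induction ns arbitrary: a) auto

lemma rods_of_append:
  "rods_of p a (xs @ ys) = rods_of p a xs \<union> rods_of p (a + int (sum_list xs)) ys"
  by (induction xs arbitrary: a) (auto simp: algebra_simps)

lemma rods_of_eq_image:
  "rods_of p a ns = (\<lambda>k. {int p * a + int p * int (sum_list (take k ns)) ..<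
       int p * a + int p * int (sum_list (take (Suc k) ns))}) ` {..<length ns}"
proof (induction ns arbitrary: a)
  case Nil then show ?case by simp
next
  case (Cons n ns)
  show ?case
    unfolding lessThan_Suc_eq_insert_0 length_Cons image_insert image_image
    by (simp add: Cons.IH algebra_simps)
qed

lemma rods_of_subset:
  "X \<in> rods_of p a ns \<Longrightarrow> X \<subseteq> {int p * a ..< int p * a + int p * int (sum_list ns)}"
proof (induction ns arbitrary: a)
  case (Cons n ns)
  have "0 \<le> int p * int n" "0 \<le> int p * int (sum_list ns)"
    by simp_all
  then have "{int p * a ..< int p * a + int p * int n}
      \<subseteq> {int p * a ..< int p * a + int p * int (sum_list (n # ns))}"
    and "{int p * (a + int n) ..< int p * (a + int n) + int p * int (sum_list ns)}
      \<subseteq> {int p * a ..< int p * a + int p * int (sum_list (n # ns))}"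
    by (auto simp: algebra_simps)
  moreover have "X = {int p * a ..< int p * a + int p * int n} \<or> X \<in> rods_of p (a + int n) ns"
    using Cons.prems by simp
  ultimately show ?case using Cons.IH by blast
qed simp

lemma is_rod_rods_of:
  "\<forall>n\<in>set ns. 0 < n \<Longrightarrow> X \<in> rods_of p a ns \<Longrightarrow> is_rod p X"
proof (induction ns arbitrary: a)
  case (Cons n ns)
  show ?case
  proof (cases "X = {int p * a ..< int p * a + int p * int n}")
    case True
    with Cons.prems show ?thesis unfolding is_rod_def by (auto intro!: exI[of _ a] exI[of _ n])
  qed (use Cons in auto)
qed simp

lemma start_notin_rods_of:
  assumes "p \<ge> 1" "0 < n"
  shows "int p * a \<notin> \<Union>(rods_of p (a + int n) ns)"
proof
  assume "int p * a \<in> \<Union>(rods_of p (a + int n) ns)"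
  then have "int p * (a + int n) \<le> int p * a"
    using rods_of_subset[of _ p "a + int n" ns] by fastforce
  moreover have "0 < int p * int n" using assms by simp
  ultimately show False by (simp add: algebra_simps)
qed

lemma rods_of_partition:
  assumes "p \<ge> 1" "\<forall>n\<in>set ns. 0 < n"
  shows "partition_on {int p * a ..< int p * a + int p * int (sum_list ns)} (rods_of p a ns)"
  using assms(2)
proof (induction ns arbitrary: a)
  case Nil then show ?case by (simp add: partition_on_empty)
next
  case (Cons n ns)
  let ?H = "{int p * a ..< int p * a + int p * int n}"
  let ?T = "{int p * (a + int n) ..< int p * (a + int n) + int p * int (sum_list ns)}"
  have tail: "partition_on ?T (rods_of p (a + int n) ns)"
    using Cons by simp
  have "disjnt ?H (\<Union>(rods_of p (a + int n) ns))"
    unfolding partition_onD1[OF tail, symmetric] by (auto simp: disjnt_def algebra_simps)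
  moreover have "{int p * a ..< int p * a + int p * int (sum_list (n # ns))} - ?H = ?T"
    by (auto simp: algebra_simps)
  moreover have "0 < int p * int n" "0 \<le> int p * int (sum_list ns)"
    using assms(1) Cons.prems by simp_all
  ultimately show ?case
    using tail Cons.prems by (simp add: partition_on_insert algebra_simps)
qed

lemma prod_rods_of:
  assumes "p \<ge> 1" "\<forall>n\<in>set ns. 0 < n"
  shows "(\<Prod>X\<in>rods_of p a ns. f (card X div p)) = prod_list (map f ns)"
  using assms(2)
proof (induction ns arbitrary: a)
  case (Cons n ns)
  have "int p * a \<in> {int p * a ..< int p * a + int p * int n}"
    using assms(1) Cons.prems by simp
  then have "{int p * a ..< int p * a + int p * int n} \<notin> rods_of p (a + int n) ns"
    using start_notin_rods_of[OF assms(1), of n a ns] Cons.prems by auto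
  moreover have "card {int p * a ..< int p * a + int p * int n} div p = n"
    using assms(1) by (simp add: nat_mult_distrib)
  ultimately show ?case using Cons by (simp add: finite_rods_of)
qed simp

lemma rods_of_inject:
  assumes "p \<ge> 1" "\<forall>n\<in>set xs. 0 < n" "\<forall>n\<in>set ys. 0 < n"
    and "rods_of p a xs = rods_of p a ys"
  shows "xs = ys"
  using assms(2-)
proof (induction xs arbitrary: a ys)
  case Nil
  then show ?case by (cases ys) auto
next
  case (Cons x xs)
  then obtain y ys' where ys: "ys = y # ys'" by (cases ys) auto
  let ?Hx = "{int p * a ..< int p * a + int p * int x}"
  let ?Hy = "{int p * a ..< int p * a + int p * int y}"
  have start: "int p * a \<in> ?Hx" "int p * a \<notin> \<Union>(rods_of p (a + int y) ys')"
    using Cons.prems ys assms(1) start_notin_rods_of[OF assms(1)] by auto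
  have "?Hx \<in> insert ?Hy (rods_of p (a + int y) ys')"
    using Cons.prems(3) ys by (metis insertI1 rods_of.simps(2))
  then have "?Hx = ?Hy" using start by blast
  then have xy: "x = y"
    using assms(1) Cons.prems ys by (simp add: atLeastLessThan_eq_iff)
  have "int p * a \<notin> \<Union>(rods_of p (a + int x) xs)"
    using start_notin_rods_of[OF assms(1), of x a xs] Cons.prems(1) by simp
  then have "?Hx \<notin> rods_of p (a + int x) xs" "?Hx \<notin> rods_of p (a + int x) ys'"
    using start xy by blast+
  moreover have "insert ?Hx (rods_of p (a + int x) xs) = insert ?Hx (rods_of p (a + int x) ys')"
    using Cons.prems(3) ys xy by simp
  ultimately have "rods_of p (a + int x) xs = rods_of p (a + int x) ys'"
    by (simp add: insert_ident)
  then show ?case using Cons.IH Cons.prems ys xy by simp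
qed

section \<open>Partitions into intervals\<close>

lemma partition_on_block_eq:
  assumes "partition_on A P" "X \<in> P" "Y \<in> P" "x \<in> X" "x \<in> Y"
  shows "X = Y"
  using disjointD[OF partition_onD2[OF assms(1)] assms(2,3)] assms(4,5) by blast

lemma partition_on_Diff:
  assumes P: "partition_on A P" and Q: "partition_on B Q" and "Q \<subseteq> P"
  shows "partition_on (A - B) (P - Q)"
proof (rule partition_onI)
  have UP: "A = \<Union>P" and UQ: "B = \<Union>Q"
    using partition_onD1[OF P] partition_onD1[OF Q] .
  have "X \<inter> Y = {}" if "X \<in> P - Q" "Y \<in> Q" for X Y
    using disjointD[OF partition_onD2[OF P]] that \<open>Q \<subseteq> P\<close> by blast
  then show "\<Union>(P - Q) = A - B"
    unfolding UP UQ using \<open>Q \<subseteq> P\<close> by blast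
  show "disjnt X Y" if "X \<in> P - Q" "Y \<in> P - Q" "X \<noteq> Y" for X Y
    using pairwiseD[OF partition_onD2[OF P]] that by blast
  show "{} \<notin> P - Q" using partition_onD3[OF P] by blast
qed

lemma partition_on_blocks_within:
  assumes P: "partition_on A P" and "\<forall>X\<in>P. X \<subseteq> C \<or> X \<inter> C = {}"
  shows "partition_on (A \<inter> C) {X \<in> P. X \<subseteq> C}"
proof (rule partition_onI)
  show "\<Union>{X \<in> P. X \<subseteq> C} = A \<inter> C"
    unfolding partition_onD1[OF P] using assms(2) by blast
  show "disjnt X Y" if "X \<in> {X \<in> P. X \<subseteq> C}" "Y \<in> {X \<in> P. X \<subseteq> C}" "X \<noteq> Y" for X Y
    using pairwiseD[OF partition_onD2[OF P]] that by blast
  show "{} \<notin> {X \<in> P. X \<subseteq> C}" using partition_onD3[OF P] by blast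
qed

lemma Min_atLeastLessThan_int [simp]: "c < d \<Longrightarrow> Min {c..<d::int} = c"
  by (rule Min_eqI) auto

definition interval_blocks :: "int set set \<Rightarrow> bool" where
  "interval_blocks P \<longleftrightarrow> (\<forall>X\<in>P. \<exists>c d. c < d \<and> X = {c..<d})"

lemma interval_blocksE:
  assumes "interval_blocks P" "X \<in> P"
  obtains c d where "c < d" "X = {c..<d}"
  using assms unfolding interval_blocks_def by blast

lemma interval_blocks_rods:
  assumes "p \<ge> 1" "\<forall>X\<in>P. is_rod p X"
  shows "interval_blocks P"
  unfolding interval_blocks_def
proof
  fix X assume "X \<in> P"
  then obtain j n where "n \<ge> 1" "X = {int p * j ..< int p * j + int p * int n}"
    using assms(2) unfolding is_rod_def by blast
  moreover have "0 < int p * int n" using assms(1) \<open>n \<ge> 1\<close> by simp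
  ultimately show "\<exists>c d. c < d \<and> X = {c..<d}"
    by (intro exI[of _ "int p * j"] exI[of _ "int p * j + int p * int n"]) simp
qed

lemma Min_block_eq_renewal:
  assumes P: "partition_on A P" "interval_blocks P"
    and "renewal_inf P x" "Z \<in> P" "x \<in> Z"
  shows "Min Z = x"
proof -
  obtain X where X: "X \<in> P" "x = Min X"
    using assms(3) unfolding renewal_inf_def by blast
  moreover obtain c d where "c < d" "X = {c..<d}"
    using interval_blocksE[OF P(2) X(1)] .
  ultimately have "x \<in> X" by simp
  with X assms(4,5) show ?thesis using partition_on_block_eq[OF P(1)] by metis
qed

lemma block_within_renewals:
  assumes P: "partition_on A P" "interval_blocks P"
    and x: "renewal_inf P x" and y: "renewal_inf P y"
    and Z: "Z \<in> P" "Z \<inter> {x..<y} \<noteq> {}"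
  shows "Z \<subseteq> {x..<y}"
proof -
  obtain c d where cd: "c < d" "Z = {c..<d}" using interval_blocksE[OF P(2) Z(1)] .
  obtain t where t: "t \<in> Z" "x \<le> t" "t < y" using Z(2) by auto
  have "x \<le> c"
  proof (rule ccontr)
    assume "\<not> x \<le> c"
    then have "x \<in> Z" using t cd by auto
    then have "Min Z = x" using Min_block_eq_renewal[OF P x Z(1)] by blast
    with cd \<open>\<not> x \<le> c\<close> show False by simp
  qed
  moreover have "d \<le> y"
  proof (rule ccontr)
    assume "\<not> d \<le> y"
    then have "y \<in> Z" using t cd by auto
    then have "Min Z = y" using Min_block_eq_renewal[OF P y Z(1)] by blast
    with cd t show False by simp
  qed
  ultimately show ?thesis using cd by auto
qed

lemma restr_eq_of_subset:
  assumes P: "partition_on A P" and Q: "partition_on T Q" and "Q \<subseteq> P"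
  shows "restr P T = Q"
proof
  show "restr P T \<subseteq> Q"
  proof
    fix V assume "V \<in> restr P T"
    then obtain X where X: "V = X \<inter> T" "X \<in> P" "X \<inter> T \<noteq> {}"
      unfolding restr_def by blast
    then obtain t W where "t \<in> X" "W \<in> Q" "t \<in> W"
      using partition_onD1[OF Q] by blast
    then have "X = W" using partition_on_block_eq[OF P X(2)] \<open>Q \<subseteq> P\<close> by blast
    then show "V \<in> Q" using X \<open>W \<in> Q\<close> partition_onD1[OF Q] by (simp add: Int_absorb2 Union_upper)
  qed
  show "Q \<subseteq> restr P T"
  proof
    fix W assume "W \<in> Q"
    moreover have "W \<subseteq> T" "W \<noteq> {}"
      using \<open>W \<in> Q\<close> partition_onD1[OF Q] partition_onD3[OF Q] by blast+
    ultimately show "W \<in> restr P T"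
      unfolding restr_def using \<open>Q \<subseteq> P\<close> by (auto intro!: exI[of _ W] simp: Int_absorb2)
  qed
qed

lemma renewal_inf_left_of_subset:
  assumes "interval_blocks P" "partition_on {x..<y} Q" "Q \<subseteq> P" "x < y"
  shows "renewal_inf P x"
proof -
  have "x \<in> {x..<y}" using assms(4) by simp
  then obtain Y where Y: "Y \<in> Q" "x \<in> Y"
    using partition_onD1[OF assms(2)] by blast
  obtain c d where cd: "c < d" "Y = {c..<d}" using interval_blocksE[OF assms(1)] Y(1) assms(3) by blast
  have "Y \<subseteq> {x..<y}" using partition_onD1[OF assms(2)] Y(1) by blast
  then have "c = x" using cd Y(2) by auto
  then show ?thesis unfolding renewal_inf_def using Y assms(3) cd by (intro bexI[of _ Y]) auto
qed

lemma renewal_inf_right_of_subset: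
  assumes P: "partition_on A P" "interval_blocks P"
    and Q: "partition_on {x..<y} Q" "Q \<subseteq> P" and "x < y" "y \<in> A"
  shows "renewal_inf P y"
proof -
  obtain Z where Z: "Z \<in> P" "y \<in> Z" using partition_onD1[OF P(1)] \<open>y \<in> A\<close> by blast
  obtain c d where cd: "c < d" "Z = {c..<d}" using interval_blocksE[OF P(2) Z(1)] .
  have "c = y"
  proof (rule ccontr)
    assume "c \<noteq> y"
    then have "y - 1 \<in> Z" using Z(2) cd by auto
    moreover have "y - 1 \<in> {x..<y}" using \<open>x < y\<close> by simp
    then obtain W where W: "W \<in> Q" "y - 1 \<in> W"
      using partition_onD1[OF Q(1)] by blast
    ultimately have "Z = W" using partition_on_block_eq[OF P(1) Z(1)] Q(2) by blast
    then have "y \<in> {x..<y}" using W Z partition_onD1[OF Q(1)] by blast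
    then show False by simp
  qed
  then show ?thesis unfolding renewal_inf_def using Z cd by (intro bexI[of _ Z]) auto
qed

lemma renewals_restr_iff_subset:
  assumes P: "partition_on A P" "interval_blocks P"
    and Q: "partition_on {x..<y} Q" and "x < y" "y \<in> A"
  shows "renewal_inf P x \<and> renewal_inf P y \<and> restr P {x..<y} = Q \<longleftrightarrow> Q \<subseteq> P"
proof
  assume H: "renewal_inf P x \<and> renewal_inf P y \<and> restr P {x..<y} = Q"
  show "Q \<subseteq> P"
  proof
    fix V assume "V \<in> Q"
    then obtain Z where Z: "V = Z \<inter> {x..<y}" "Z \<in> P" "Z \<inter> {x..<y} \<noteq> {}"
      using H unfolding restr_def by blast
    then have "Z \<subseteq> {x..<y}" using block_within_renewals[OF P] H by blast
    then show "V \<in> P" using Z by (simp add: Int_absorb2)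
  qed
next
  assume "Q \<subseteq> P"
  then show "renewal_inf P x \<and> renewal_inf P y \<and> restr P {x..<y} = Q"
    using renewal_inf_left_of_subset[OF P(2) Q] renewal_inf_right_of_subset[OF P Q]
      restr_eq_of_subset[OF P(1) Q] assms(4,5) by blast
qed

lemma event_inf_eq_supersets:
  assumes "p \<ge> 1" "r < s" "partition_on {int p * int r ..< int p * int s} Q"
  shows "event_inf p r s Q = {P \<in> rodpart_inf p. Q \<subseteq> P}"
proof -
  have "P \<in> event_inf p r s Q \<longleftrightarrow> Q \<subseteq> P" if "P \<in> rodpart_inf p" for P
  proof -
    have "partition_on UNIV P" "interval_blocks P"
      using that interval_blocks_rods[OF assms(1)] unfolding rodpart_inf_def by auto
    from renewals_restr_iff_subset[OF this assms(3)] assms that show ?thesis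
      unfolding event_inf_def by simp
  qed
  then show ?thesis unfolding event_inf_def by blast
qed

lemma event_fin_eq_supersets:
  assumes "p \<ge> 1" "r < s" "s < N" "partition_on {int p * int r ..< int p * int s} Q"
  shows "event_fin p N r s Q = {P \<in> rodpart_fin p N. Q \<subseteq> P}"
proof -
  have "P \<in> event_fin p N r s Q \<longleftrightarrow> Q \<subseteq> P" if "P \<in> rodpart_fin p N" for P
  proof -
    have "partition_on {0..<int p * int N} P" "interval_blocks P"
      using that interval_blocks_rods[OF assms(1)] unfolding rodpart_fin_def by auto
    moreover have "int p * int s \<in> {0..<int p * int N}" "int p * int r \<noteq> int p * int N"
      "int p * int s \<noteq> int p * int N"
      using assms by auto
    ultimately show ?thesis
      using renewals_restr_iff_subset[of _ P "int p * int r" "int p * int s" Q] assms that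
      unfolding event_fin_def renewal_fin_def renewal_inf_def by auto
  qed
  then show ?thesis unfolding event_fin_def by blast
qed

lemma cyl_eq_supersets: "cyl p j ns = {P \<in> rodpart_inf p. rods_of p j ns \<subseteq> P}"
  unfolding cyl_def rods_of_eq_image by auto

section \<open>Rod partitions containing a fixed block of rods\<close>

lemma rod_at_start:
  assumes p: "p \<ge> 1" and X: "is_rod p X" "X \<subseteq> {int p * a ..< int p * a + int p * int k}"
    "int p * a \<in> X"
  obtains n where "0 < n" "n \<le> k" "X = {int p * a ..< int p * a + int p * int n}"
proof -
  obtain j n where jn: "n \<ge> 1" "X = {int p * j ..< int p * j + int p * int n}"
    using X(1) unfolding is_rod_def by blast
  have pn: "0 < int p * int n" using p jn(1) by simp
  have "int p * j \<in> X" "int p * j + int p * int n - 1 \<in> X"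
    using jn pn by simp_all
  then have "int p * a \<le> int p * j" "int p * j + int p * int n \<le> int p * a + int p * int k"
    using X(2) by auto
  moreover have "int p * j \<le> int p * a" using X(3) jn by simp
  ultimately have "j = a" "int p * int n \<le> int p * int k" using p by simp_all
  then have "n \<le> k" using p by (simp add: mult_le_cancel_left_pos)
  show thesis by (rule that[of n]) (use jn \<open>j = a\<close> \<open>n \<le> k\<close> in simp_all)
qed

lemma rod_partition_eq_rods_of:
  assumes p: "p \<ge> 1"
  shows "partition_on {int p * a ..< int p * a + int p * int k} Q \<Longrightarrow> \<forall>X\<in>Q. is_rod p X
    \<Longrightarrow> \<exists>ns. (\<forall>n\<in>set ns. 0 < n) \<and> sum_list ns = k \<and> Q = rods_of p a ns"
proof (induction k arbitrary: a Q rule: less_induct)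
  case (less k a Q)
  let ?I = "{int p * a ..< int p * a + int p * int k}"
  show ?case
  proof (cases "k = 0")
    case True
    then show ?thesis using less.prems(1)
      by (intro exI[of _ "[]"]) (simp add: partition_on_empty)
  next
    case False
    then have "int p * a \<in> ?I" using p by simp
    then obtain X where X: "X \<in> Q" "int p * a \<in> X"
      using partition_onD1[OF less.prems(1)] by blast
    moreover have "X \<subseteq> ?I" using partition_onD1[OF less.prems(1)] X(1) by blast
    ultimately obtain n where n: "0 < n" "n \<le> k" "X = {int p * a ..< int p * a + int p * int n}"
      using rod_at_start[OF p] less.prems(2) by blast
    have "partition_on (?I - X) (Q - {X})"
      by (rule partition_on_Diff[OF less.prems(1) partition_on_space]) (use X in auto)
    moreover have "?I - X = {int p * (a + int n) ..< int p * (a + int n) + int p * int (k - n)}"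
      using n by (auto simp: algebra_simps of_nat_diff)
    ultimately have rest: "partition_on
        {int p * (a + int n) ..< int p * (a + int n) + int p * int (k - n)} (Q - {X})"
      by simp
    have "k - n < k" "\<forall>Y\<in>Q - {X}. is_rod p Y" using n less.prems(2) by auto
    with less.IH rest obtain ns where ns: "\<forall>n\<in>set ns. 0 < n" "sum_list ns = k - n"
      "Q - {X} = rods_of p (a + int n) ns"
      by blast
    have "Q = insert X (rods_of p (a + int n) ns)" using X(1) ns(3) by blast
    with n ns show ?thesis by (intro exI[of _ "n # ns"]) simp
  qed
qed

lemma append_eq_append_sum_list:
  assumes "\<forall>n\<in>set xs. 0 < (n::nat)" "\<forall>n\<in>set xs'. 0 < n"
    and "xs @ ys = xs' @ ys'" "sum_list xs = sum_list xs'"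
  shows "xs = xs'"
  using assms
proof (induction xs arbitrary: xs')
  case Nil
  then show ?case by (cases xs') auto
next
  case (Cons x xs)
  then show ?case by (cases xs') auto
qed

lemma rodpart_fin_superset_decomp:
  assumes p: "p \<ge> 1" and rs: "r < s" "s \<le> N"
    and qs: "\<forall>n\<in>set qs. 0 < n" "sum_list qs = s - r"
    and P: "P \<in> rodpart_fin p N" "rods_of p (int r) qs \<subseteq> P"
  obtains as bs where "as \<in> compositions r" "bs \<in> compositions (N - s)"
    "P = rods_of p 0 (as @ qs @ bs)"
proof -
  let ?Q = "rods_of p (int r) qs"
  let ?T = "{int p * int r ..< int p * int s}"
  have part: "partition_on {0..<int p * int N} P" and rods: "\<forall>X\<in>P. is_rod p X"
    using P(1) unfolding rodpart_fin_def by auto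
  have pr: "0 \<le> int p * int r" "int p * int r < int p * int s" "int p * int s \<le> int p * int N"
    using p rs by simp_all
  have Q: "partition_on ?T ?Q"
    using rods_of_partition[OF p qs(1), of "int r"] qs(2) rs by (simp add: of_nat_diff algebra_simps)
  have rest: "partition_on ({0..<int p * int N} - ?T) (P - ?Q)"
    by (rule partition_on_Diff[OF part Q P(2)])
  have sides: "X \<subseteq> {..<int p * int r} \<or> X \<subseteq> {int p * int s..}" if "X \<in> P - ?Q" for X
  proof -
    have "X \<in> P" using that by blast
    then obtain c d where cd: "c < d" "X = {c..<d}"
      using interval_blocksE[OF interval_blocks_rods[OF p rods]] by blast
    have disj: "X \<inter> ?T = {}" using partition_onD1[OF rest] that by blast
    have "\<not> (int p * int r < d \<and> c < int p * int s)"
    proof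
      assume "int p * int r < d \<and> c < int p * int s"
      then have "max c (int p * int r) \<in> X \<inter> ?T" using cd pr by auto
      with disj show False by blast
    qed
    then show ?thesis using cd by auto
  qed
  define A where "A = {X \<in> P - ?Q. X \<subseteq> {..<int p * int r}}"
  define B where "B = {X \<in> P - ?Q. X \<subseteq> {int p * int s..}}"
  have "partition_on (({0..<int p * int N} - ?T) \<inter> {..<int p * int r}) A"
    unfolding A_def by (rule partition_on_blocks_within[OF rest]) (use sides pr in fastforce)
  moreover have "({0..<int p * int N} - ?T) \<inter> {..<int p * int r} = {int p * 0 ..< int p * 0 + int p * int r}"
    using pr by auto
  moreover have "\<forall>X\<in>A. is_rod p X" using rods unfolding A_def by blast
  ultimately obtain as where as: "\<forall>n\<in>set as. 0 < n" "sum_list as = r" "A = rods_of p 0 as"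
    using rod_partition_eq_rods_of[OF p] by (metis (no_types, lifting))
  have "partition_on (({0..<int p * int N} - ?T) \<inter> {int p * int s..}) B"
    unfolding B_def by (rule partition_on_blocks_within[OF rest]) (use sides pr in fastforce)
  moreover have "({0..<int p * int N} - ?T) \<inter> {int p * int s..}
      = {int p * int s ..< int p * int s + int p * int (N - s)}"
  proof -
    have "\<And>a b c :: int. 0 \<le> a \<Longrightarrow> ({0..<b} - {c..<a}) \<inter> {a..} = {a..<b}" by auto
    moreover have "int p * int s + int p * int (N - s) = int p * int N"
      using rs by (simp add: of_nat_diff algebra_simps)
    ultimately show ?thesis by simp
  qed
  moreover have "\<forall>X\<in>B. is_rod p X" using rods unfolding B_def by blast
  ultimately obtain bs where bs: "\<forall>n\<in>set bs. 0 < n" "sum_list bs = N - s"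
    "B = rods_of p (int s) bs"
    using rod_partition_eq_rods_of[OF p] by (metis (no_types, lifting))
  have "P = A \<union> ?Q \<union> B" using sides P(2) unfolding A_def B_def by blast
  also have "\<dots> = rods_of p 0 (as @ qs @ bs)"
    using as bs qs rs by (simp add: rods_of_append of_nat_diff Un_assoc)
  finally show thesis using that as bs unfolding compositions_def by blast
qed

lemma bij_betw_compositions_rodpart_fin:
  assumes p: "p \<ge> 1" and rs: "r < s" "s \<le> N"
    and qs: "\<forall>n\<in>set qs. 0 < n" "sum_list qs = s - r"
  shows "bij_betw (\<lambda>(as, bs). rods_of p 0 (as @ qs @ bs)) (compositions r \<times> compositions (N - s))
     {P \<in> rodpart_fin p N. rods_of p (int r) qs \<subseteq> P}"
proof (rule bij_betwI')
  fix z z' assume "z \<in> compositions r \<times> compositions (N - s)" "z' \<in> compositions r \<times> compositions (N - s)"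
  moreover obtain as bs as' bs' where z: "z = (as, bs)" "z' = (as', bs')" by fastforce
  ultimately have pos: "\<forall>n\<in>set (as @ qs @ bs). 0 < n" "\<forall>n\<in>set (as' @ qs @ bs'). 0 < n"
    and comp: "as \<in> compositions r" "as' \<in> compositions r"
    using qs unfolding compositions_def by auto
  show "((case z of (as, bs) \<Rightarrow> rods_of p 0 (as @ qs @ bs))
      = (case z' of (as, bs) \<Rightarrow> rods_of p 0 (as @ qs @ bs))) = (z = z')"
  proof
    assume "(case z of (as, bs) \<Rightarrow> rods_of p 0 (as @ qs @ bs))
      = (case z' of (as, bs) \<Rightarrow> rods_of p 0 (as @ qs @ bs))"
    then have "as @ qs @ bs = as' @ qs @ bs'"
      using rods_of_inject[OF p pos] z by simp
    moreover from this have "as = as'"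
      using append_eq_append_sum_list[of as as' "qs @ bs" "qs @ bs'"] comp
      unfolding compositions_def by simp
    ultimately show "z = z'" using z by simp
  qed simp
next
  fix z assume "z \<in> compositions r \<times> compositions (N - s)"
  moreover obtain as bs where z: "z = (as, bs)" by fastforce
  ultimately have pos: "\<forall>n\<in>set (as @ qs @ bs). 0 < n" and sum: "sum_list (as @ qs @ bs) = N"
    using qs rs unfolding compositions_def by auto
  have "partition_on {0..<int p * int N} (rods_of p 0 (as @ qs @ bs))"
    using rods_of_partition[OF p pos, of 0] unfolding sum by simp
  moreover have "rods_of p (int r) qs \<subseteq> rods_of p 0 (as @ qs @ bs)"
    using \<open>z \<in> _\<close> z unfolding compositions_def by (auto simp: rods_of_append)
  ultimately show "(case z of (as, bs) \<Rightarrow> rods_of p 0 (as @ qs @ bs))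
      \<in> {P \<in> rodpart_fin p N. rods_of p (int r) qs \<subseteq> P}"
    using z is_rod_rods_of[OF pos] unfolding rodpart_fin_def by auto
next
  fix P assume "P \<in> {P \<in> rodpart_fin p N. rods_of p (int r) qs \<subseteq> P}"
  then obtain as bs where "as \<in> compositions r" "bs \<in> compositions (N - s)"
    "P = rods_of p 0 (as @ qs @ bs)"
    using rodpart_fin_superset_decomp[OF p rs qs] by blast
  then show "\<exists>z\<in>compositions r \<times> compositions (N - s).
      P = (case z of (as, bs) \<Rightarrow> rods_of p 0 (as @ qs @ bs))"
    by (intro bexI[of _ "(as, bs)"]) simp_all
qed

section \<open>Weights and the two probabilities\<close>

lemma lpw_nonneg: "0 \<le> lpw p R l n"
  unfolding lpw_def laugh_alpha_def laugh_r_def by (simp add: sum_nonneg)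

lemma laugh_a_one_particle:
  assumes "R > 0" "l > 0"
  shows "laugh_a p R l 1 m \<noteq> 0 \<longleftrightarrow> m 0 = 0"
proof -
  have no_pairs: "laugh_pairs 1 = {}" by (auto simp: laugh_pairs_def)
  have "{0<..<Suc 0} = ({}::nat set)" by auto
  then have "laugh_coeff p 1 m = (if m 0 = 0 then 1 else 0)"
    unfolding laugh_coeff_def no_pairs laugh_exp_def
    by (subst PiE_empty_domain) (simp add: less_one)
  moreover have "laugh_kappa p R l 1 > 0" "laugh_orbnorm R l (m 0) > 0"
    using assms unfolding laugh_kappa_def laugh_orbnorm_def by simp_all
  ultimately show ?thesis unfolding laugh_a_def by simp
qed

lemma lpw_one_pos:
  assumes "R > 0" "l > 0"
  shows "lpw p R l 1 > 0"
proof -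
  define m0 :: "nat \<Rightarrow> nat" where "m0 = (\<lambda>i. if i \<in> {0..<1} then 0 else undefined)"
  let ?S = "{m \<in> laugh_tuples p 1. {k. tuple_renewal p 1 m k} = {0, 1}}"
  have "m0 \<in> laugh_tuples p 1" unfolding laugh_tuples_def m0_def by auto
  moreover have "{k. tuple_renewal p 1 m0 k} = {0, 1}"
    unfolding tuple_renewal_def m0_def by (auto simp: take_Cons')
  ultimately have "m0 \<in> ?S" by simp
  moreover have "finite ?S" unfolding laugh_tuples_def by (auto intro: finite_PiE)
  moreover have "0 < (laugh_a p R l 1 m0)\<^sup>2"
    using laugh_a_one_particle[OF assms, of p m0] by (simp add: m0_def)
  ultimately have "0 < (\<Sum>m\<in>?S. (laugh_a p R l 1 m)\<^sup>2)"
    by (intro order.strict_trans2[OF _ member_le_sum]) simp_all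
  then have "laugh_alpha p R l 1 > 0" unfolding laugh_alpha_def by simp
  then show ?thesis unfolding lpw_def laugh_r_def by simp
qed

lemma lmu_pos:
  assumes "R > 0" "l > 0" "summable (\<lambda>n. real n * lpw p R l n)"
  shows "lmu p R l > 0"
proof -
  have "(\<Sum>n\<in>{1}. real n * lpw p R l n) \<le> lmu p R l"
    unfolding lmu_def by (rule sum_le_suminf[OF assms(3)]) (auto simp: lpw_nonneg)
  then show ?thesis using lpw_one_pos[OF assms(1,2), of p] by simp
qed

lemma finite_compositions: "finite (compositions k)"
proof (rule finite_subset)
  show "compositions k \<subseteq> {xs. set xs \<subseteq> {0..k} \<and> length xs \<le> k}"
  proof
    fix xs assume "xs \<in> compositions k"
    then have "\<forall>n\<in>set xs. 0 < n" "sum_list xs = k" by (auto simp: compositions_def)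
    moreover have "length xs \<le> sum_list xs" if "\<forall>n\<in>set xs. 0 < n"
      using that by (induction xs) auto
    ultimately show "xs \<in> {xs. set xs \<subseteq> {0..k} \<and> length xs \<le> k}"
      using member_le_sum_list[of _ xs] by auto
  qed
qed (rule finite_lists_length_le, simp)

lemma lu_pos:
  assumes "R > 0" "l > 0" "k \<ge> 1"
  shows "lu p R l k > 0"
proof -
  have "replicate k 1 \<in> compositions k" by (auto simp: compositions_def sum_list_replicate)
  then have "prod_list (map (lpw p R l) (replicate k 1)) \<le> lu p R l k"
    unfolding lu_def using finite_compositions
    by (intro member_le_sum) (auto intro!: prod_list_nonneg simp: lpw_nonneg)
  moreover have "prod_list (map (lpw p R l) (replicate k 1)) > 0"
    using lpw_one_pos[OF assms(1,2)] by (simp add: prod_list_replicate)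
  ultimately show ?thesis by simp
qed

lemma PN_prob_event_fin:
  assumes p: "p \<ge> 1" and rs: "r < s" "s < N"
    and qs: "\<forall>n\<in>set qs. 0 < n" "sum_list qs = s - r"
  shows "PN_prob p R l N (event_fin p N r s (rods_of p (int r) qs))
     = lu p R l r * prod_list (map (lpw p R l) qs) * lu p R l (N - s) / lu p R l N"
proof -
  let ?f = "\<lambda>(as, bs). rods_of p 0 (as @ qs @ bs)"
  let ?W = "\<lambda>P. (\<Prod>X\<in>P. lpw p R l (card X div p)) / lu p R l N"
  let ?w = "\<lambda>ns. prod_list (map (lpw p R l) ns)"
  have Qpart: "partition_on {int p * int r ..< int p * int s} (rods_of p (int r) qs)"
    using rods_of_partition[OF p qs(1), of "int r"] qs(2) rs by (simp add: of_nat_diff algebra_simps)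
  have "PN_prob p R l N (event_fin p N r s (rods_of p (int r) qs))
      = sum ?W {P \<in> rodpart_fin p N. rods_of p (int r) qs \<subseteq> P}"
    unfolding PN_prob_def event_fin_eq_supersets[OF p rs Qpart] by (intro sum.cong) auto
  also have "\<dots> = (\<Sum>z\<in>compositions r \<times> compositions (N - s). ?W (?f z))"
    using bij_betw_compositions_rodpart_fin[OF p rs(1) _ qs] rs
    by (intro sum.reindex_bij_betw[symmetric]) simp
  also have "\<dots> = (\<Sum>z\<in>compositions r \<times> compositions (N - s). ?w (fst z) * ?w (snd z))
      * (?w qs / lu p R l N)"
    unfolding sum_distrib_right
  proof (intro sum.cong refl)
    fix z assume "z \<in> compositions r \<times> compositions (N - s)"
    then have "\<forall>n\<in>set (fst z @ qs @ snd z). 0 < n" using qs by (auto simp: compositions_def)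
    then show "?W (?f z) = ?w (fst z) * ?w (snd z) * (?w qs / lu p R l N)"
      using prod_rods_of[OF p, where ns="fst z @ qs @ snd z" and a=0 and f="lpw p R l"]
      by (simp add: case_prod_beta algebra_simps)
  qed
  also have "(\<Sum>z\<in>compositions r \<times> compositions (N - s). ?w (fst z) * ?w (snd z))
      = lu p R l r * lu p R l (N - s)"
    unfolding lu_def sum_product sum.cartesian_product by (simp add: case_prod_beta)
  finally show ?thesis by simp
qed

lemma measure_event_inf:
  assumes M: "stationary_renewal p R l M" and p: "p \<ge> 1" and "r < s"
    and qs: "\<forall>n\<in>set qs. 0 < n" "sum_list qs = s - r"
  shows "measure M (event_inf p r s (rods_of p (int r) qs))
     = prod_list (map (lpw p R l) qs) / lmu p R l"
proof -
  have Qpart: "partition_on {int p * int r ..< int p * int s} (rods_of p (int r) qs)"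
    using rods_of_partition[OF p qs(1), of "int r"] qs(2) \<open>r < s\<close>
    by (simp add: of_nat_diff algebra_simps)
  have "event_inf p r s (rods_of p (int r) qs) = cyl p (int r) qs"
    unfolding event_inf_eq_supersets[OF p \<open>r < s\<close> Qpart] cyl_eq_supersets ..
  moreover have "qs \<noteq> []" using qs \<open>r < s\<close> by auto
  ultimately show ?thesis using M qs(1) unfolding stationary_renewal_def by simp
qed

lemma tendsto_pos_imp_lower_bound:
  fixes u :: "nat \<Rightarrow> real"
  assumes "u \<longlonglongrightarrow> c" "0 < c" "\<And>k. k \<ge> 1 \<Longrightarrow> 0 < u k"
  obtains m where "0 < m" "\<And>k. k \<ge> 1 \<Longrightarrow> m \<le> u k"
proof -
  obtain K where K: "\<And>k. k \<ge> K \<Longrightarrow> c / 2 < u k"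
    using order_tendstoD(1)[OF assms(1), of "c / 2"] assms(2)
    unfolding eventually_sequentially by auto
  define m where "m = Min (insert (c / 2) (u ` {1..<K}))"
  have "0 < m" unfolding m_def using assms(2,3) by (subst Min_gr_iff) auto
  moreover have "m \<le> u k" if "k \<ge> 1" for k
  proof (cases "k \<ge> K")
    case True
    have "m \<le> c / 2" unfolding m_def by (rule Min_le) auto
    with K[OF True] show ?thesis by simp
  next
    case False
    with that show ?thesis unfolding m_def by (intro Min_le) auto
  qed
  ultimately show thesis by (rule that)
qed

lemma abs_diff_le_SUP_tail:
  fixes u :: "nat \<Rightarrow> real"
  assumes "Bseq u" "d \<le> k"
  shows "\<bar>u k - c\<bar> \<le> (SUP j\<in>{d..}. \<bar>u j - c\<bar>)"
proof (rule cSUP_upper)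
  obtain B where B: "\<And>j. \<bar>u j\<bar> \<le> B" using assms(1) by (auto simp: Bseq_def)
  have "\<bar>u j - c\<bar> \<le> B + \<bar>c\<bar>" for j
    using abs_triangle_ineq4[of "u j" c] B[of j] by linarith
  then show "bdd_above ((\<lambda>j. \<bar>u j - c\<bar>) ` {d..})" by (intro bdd_aboveI2)
qed (use assms(2) in simp)

lemma abs_ratio_product_sub_le:
  fixes a b n c w B m e :: real
  assumes "w \<ge> 0" "m > 0" "a \<ge> m" "b \<ge> m" "n \<ge> m" "b \<le> B" "c \<ge> 0"
    "\<bar>a - c\<bar> \<le> e" "\<bar>b - c\<bar> \<le> e" "\<bar>n - c\<bar> \<le> e"
  shows "\<bar>a * w * b / n - c * w\<bar> \<le> ((B + 2 * c) / m\<^sup>2) * (a * w * b / n) * e"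
proof -
  have n: "n > 0" using assms by linarith
  have "\<bar>(a - c) * b\<bar> \<le> e * B" "\<bar>c * (b - c)\<bar> \<le> c * e" "\<bar>c * (c - n)\<bar> \<le> c * e"
    unfolding abs_mult using assms by (auto intro: mult_mono mult_left_mono simp: abs_minus_commute)
  moreover have "a * b - c * n = (a - c) * b + c * (b - c) + c * (c - n)" by (simp add: algebra_simps)
  ultimately have D: "\<bar>a * b - c * n\<bar> \<le> e * (B + 2 * c)" by (simp add: algebra_simps)
  have "m\<^sup>2 \<le> a * b" unfolding power2_eq_square using assms by (intro mult_mono) auto
  then have ab: "1 \<le> a * b / m\<^sup>2" using assms by simp
  have "a * w * b / n - c * w = (w / n) * (a * b - c * n)"
    using n by (simp add: field_simps)
  then have "\<bar>a * w * b / n - c * w\<bar> = (w / n) * \<bar>a * b - c * n\<bar>"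
    using assms n by (simp add: abs_mult)
  also have "\<dots> \<le> (w / n) * (e * (B + 2 * c))" using D assms n by (intro mult_left_mono) auto
  also have "\<dots> \<le> (w / n) * (e * (B + 2 * c)) * (a * b / m\<^sup>2)"
  proof -
    have "0 \<le> e" using assms(8) by linarith
    then have "0 \<le> (w / n) * (e * (B + 2 * c))"
      by (intro mult_nonneg_nonneg) (use assms n in auto)
    then have "(w / n) * (e * (B + 2 * c)) * 1 \<le> (w / n) * (e * (B + 2 * c)) * (a * b / m\<^sup>2)"
      by (rule mult_left_mono[OF ab])
    then show ?thesis by (simp only: mult_1_right)
  qed
  also have "\<dots> = ((B + 2 * c) / m\<^sup>2) * (a * w * b / n) * e" by (simp add: field_simps)
  finally show ?thesis .
qed

theorem lemma5p6:
  fixes p :: nat and R l :: real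
  assumes "p \<ge> 1" and "R > 0" and "l > 0"
    and "convergent (\<lambda>N. ln (laugh_C p R l N) / real N)"
    and "lpw p R l sums 1"
    and "summable (\<lambda>n. real n * lpw p R l n)"
    and "lu p R l \<longlonglongrightarrow> 1 / lmu p R l"
  shows "\<exists>K::real. \<forall>(N::nat) (d::nat) (r::nat) (s::nat) Q M.
     1 \<le> d \<and> r < s \<and> d \<le> r \<and> s + d \<le> N
     \<and> partition_on {int p * int r ..< int p * int s} Q \<and> (\<forall>X\<in>Q. is_rod p X)
     \<and> stationary_renewal p R l M
     \<longrightarrow> \<bar>PN_prob p R l N (event_fin p N r s Q) - measure M (event_inf p r s Q)\<bar>
         \<le> K * PN_prob p R l N (event_fin p N r s Q)
             * (SUP k\<in>{d..}. \<bar>lu p R l k - 1 / lmu p R l\<bar>)"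
proof -
  let ?u = "lu p R l" and ?c = "1 / lmu p R l"
  have c: "?c > 0" using lmu_pos[OF assms(2,3,6)] by simp
  have bseq: "Bseq ?u" using convergent_imp_Bseq[OF convergentI[OF assms(7)]] .
  then obtain B where B: "\<And>k. ?u k \<le> B" by (auto simp: Bseq_def abs_le_iff)
  obtain m where m: "0 < m" "\<And>k. k \<ge> 1 \<Longrightarrow> m \<le> ?u k"
    using tendsto_pos_imp_lower_bound[OF assms(7) c] lu_pos[OF assms(2,3)] by blast
  show ?thesis
  proof (intro exI[of _ "(B + 2 * ?c) / m\<^sup>2"] allI impI, elim conjE)
    fix N d r s Q M
    assume rs: "1 \<le> d" "r < s" "d \<le> r" "s + d \<le> N"
      and Q: "partition_on {int p * int r ..< int p * int s} Q" "\<forall>X\<in>Q. is_rod p X"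
      and M: "stationary_renewal p R l M"
    have "partition_on {int p * int r ..< int p * int r + int p * int (s - r)} Q"
      using Q(1) rs by (simp add: of_nat_diff algebra_simps)
    then obtain qs where qs: "\<forall>n\<in>set qs. 0 < n" "sum_list qs = s - r" "Q = rods_of p (int r) qs"
      using rod_partition_eq_rods_of[OF assms(1)] Q(2) by blast
    let ?w = "prod_list (map (lpw p R l) qs)"
    have w: "0 \<le> ?w" by (rule prod_list_nonneg) (auto simp: lpw_nonneg)
    have "\<bar>?u k - ?c\<bar> \<le> (SUP k\<in>{d..}. \<bar>?u k - ?c\<bar>)" if "k \<ge> d" for k
      using abs_diff_le_SUP_tail[OF bseq that] .
    then have "\<bar>?u r * ?w * ?u (N - s) / ?u N - ?c * ?w\<bar>
        \<le> (B + 2 * ?c) / m\<^sup>2 * (?u r * ?w * ?u (N - s) / ?u N) * (SUP k\<in>{d..}. \<bar>?u k - ?c\<bar>)"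
      using rs m B c w by (intro abs_ratio_product_sub_le) auto
    then show "\<bar>PN_prob p R l N (event_fin p N r s Q) - measure M (event_inf p r s Q)\<bar>
        \<le> (B + 2 * ?c) / m\<^sup>2 * PN_prob p R l N (event_fin p N r s Q) * (SUP k\<in>{d..}. \<bar>?u k - ?c\<bar>)"
      using PN_prob_event_fin[OF assms(1) _ _ qs(1,2)] measure_event_inf[OF M assms(1) _ qs(1,2)] rs
      unfolding qs(3) by simp
  qed
qed

end
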